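(* Let $M_3$ be a number such that for any three mutually orthogonal affine planes in $\mathbb{R}^3$ at least one of them meets $\Gamma=\{\gamma(t):t\ge M_3\}$ in at most one point, where $\gamma(t)=(t,t^2,t^3)$, and assume $M_3>0$. Then for any three mutually orthogonal affine planes $H_1,H_2,H_3\subset\mathbb{R}^3$, the set $\Gamma\cap(H_1\cup H_2\cup H_3)$ has at most $6$ points.
   Context: Affine planes are mutually orthogonal if their normal vectors are pairwise orthogonal. *)

theory Defs
  imports "HOL-Analysis.Analysis"
begin

definition gamma :: "real \<Rightarrow> real^3" where
  "gamma t = vector [t, t^2, t^3]"

definition Gamma :: "real \<Rightarrow> (real^3) set" where
  "Gamma M = gamma ` {M..}"

text \<open>The affine plane with normal vector n and offset c: {x. n . x = c} (plane iff n nonzero).\<close>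
definition plane :: "real^3 \<Rightarrow> real \<Rightarrow> (real^3) set" where
  "plane n c = {x. n \<bullet> x = c}"

definition mutually_orthogonal_normals :: "real^3 \<Rightarrow> real^3 \<Rightarrow> real^3 \<Rightarrow> bool" where
  "mutually_orthogonal_normals n1 n2 n3 \<longleftrightarrow>
     n1 \<noteq> 0 \<and> n2 \<noteq> 0 \<and> n3 \<noteq> 0 \<and>
     n1 \<bullet> n2 = 0 \<and> n1 \<bullet> n3 = 0 \<and> n2 \<bullet> n3 = 0"

end

theory Submission
  imports Defs "HOL-Computational_Algebra.Polynomial"
begin

text \<open>A plane with normal n meets the moment curve at the roots of the cubic
  n$1 t + n$2 t^2 + n$3 t^3 = c, so in at most three points. If all three roots are positive,
  Vieta's formulas force the coefficients n$1, n$2, n$3 to alternate in sign, and two vectors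
  with alternating signs have nonzero inner product. Hence of three mutually orthogonal planes
  at most one meets the curve in three points; as another one meets it in at most one point,
  the union meets it in at most 3 + 2 + 1 = 6 points.\<close>

definition alternating :: "real^3 \<Rightarrow> bool" where
  "alternating n \<longleftrightarrow> (\<exists>s. 0 < s * n$1 \<and> s * n$2 < 0 \<and> 0 < s * n$3)"

lemma inner_alternating_nonzero:
  assumes "alternating a" "alternating b"
  shows "a \<bullet> b \<noteq> 0"
proof -
  obtain s t where s: "0 < s * a$1" "s * a$2 < 0" "0 < s * a$3"
    and t: "0 < t * b$1" "t * b$2 < 0" "0 < t * b$3"
    using assms by (auto simp: alternating_def)
  have "(s * t) * (a \<bullet> b) = (s*a$1) * (t*b$1) + (s*a$2) * (t*b$2) + (s*a$3) * (t*b$3)"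
    by (simp add: inner_vec_def sum_3 algebra_simps)
  also have "\<dots> > 0"
    using s t by (simp add: add_pos_pos mult_pos_pos mult_neg_neg)
  finally show ?thesis by auto
qed

lemma cubic_roots_finite_card_le_3:
  fixes a1 a2 a3 c :: real
  assumes "a1 \<noteq> 0 \<or> a2 \<noteq> 0 \<or> a3 \<noteq> 0"
  defines "R \<equiv> {t. a1*t + a2*t^2 + a3*t^3 = c}"
  shows "finite R \<and> card R \<le> 3"
proof -
  define p where "p = [:-c, a1, a2, a3:]"
  have "p \<noteq> 0" using assms(1) by (auto simp: p_def)
  have R: "R = {t. poly p t = 0}"
    by (auto simp: R_def p_def algebra_simps power2_eq_square power3_eq_cube)
  have "degree p \<le> 3" unfolding p_def by (simp add: degree_pCons_le)
  then show ?thesis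
    unfolding R using poly_roots_finite[OF \<open>p \<noteq> 0\<close>] card_poly_roots_bound[OF \<open>p \<noteq> 0\<close>]
    by linarith
qed

lemma cubic_vieta:
  fixes a1 a2 a3 c r1 r2 r3 :: real
  assumes distinct: "r1 \<noteq> r2" "r1 \<noteq> r3" "r2 \<noteq> r3"
    and roots: "a1*r1 + a2*r1^2 + a3*r1^3 = c" "a1*r2 + a2*r2^2 + a3*r2^3 = c"
       "a1*r3 + a2*r3^2 + a3*r3^3 = c"
  shows "a2 = -a3*(r1+r2+r3)" and "a1 = a3*(r1*r2+r1*r3+r2*r3)"
proof -
  \<comment> \<open>divided differences of the cubic at the three roots\<close>
  have "(r1-r2) * (a3*(r1^2+r1*r2+r2^2) + a2*(r1+r2) + a1) = 0"
    using roots by (simp add: algebra_simps power2_eq_square power3_eq_cube)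
  then have q12: "a3*(r1^2+r1*r2+r2^2) + a2*(r1+r2) + a1 = 0" using distinct by simp
  have "(r1-r3) * (a3*(r1^2+r1*r3+r3^2) + a2*(r1+r3) + a1) = 0"
    using roots by (simp add: algebra_simps power2_eq_square power3_eq_cube)
  then have q13: "a3*(r1^2+r1*r3+r3^2) + a2*(r1+r3) + a1 = 0" using distinct by simp
  have "(r2-r3) * (a3*(r1+r2+r3) + a2) = 0"
    using q12 q13 by (simp add: algebra_simps power2_eq_square)
  then show a2: "a2 = -a3*(r1+r2+r3)" using distinct by simp
  show "a1 = a3*(r1*r2+r1*r3+r2*r3)"
    using q12 unfolding a2 by (simp add: algebra_simps power2_eq_square)
qed

lemma Gamma_inter_plane:
  "Gamma M \<inter> plane n c = gamma ` {t. M \<le> t \<and> n$1*t + n$2*t^2 + n$3*t^3 = c}"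
  by (auto simp: Gamma_def plane_def gamma_def inner_vec_def sum_3)

lemma inj_gamma: "inj gamma"
  by (rule injI) (metis gamma_def vector_3(1))

lemma card_Gamma_inter_plane:
  "card (Gamma M \<inter> plane n c) = card {t. M \<le> t \<and> n$1*t + n$2*t^2 + n$3*t^3 = c}"
  unfolding Gamma_inter_plane by (rule card_image) (meson inj_gamma inj_on_subset subset_UNIV)

lemma nonzero_vec3_component: "(n::real^3) \<noteq> 0 \<Longrightarrow> n$1 \<noteq> 0 \<or> n$2 \<noteq> 0 \<or> n$3 \<noteq> 0"
  by (auto simp: vec_eq_iff forall_3)

lemma Gamma_inter_plane_finite_card_le_3:
  assumes "n \<noteq> 0"
  shows "finite (Gamma M \<inter> plane n c) \<and> card (Gamma M \<inter> plane n c) \<le> 3"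
proof -
  have "finite {t. n$1*t + n$2*t^2 + n$3*t^3 = c} \<and> card {t. n$1*t + n$2*t^2 + n$3*t^3 = c} \<le> 3"
    using cubic_roots_finite_card_le_3 nonzero_vec3_component[OF assms] by blast
  moreover have "{t. M \<le> t \<and> n$1*t + n$2*t^2 + n$3*t^3 = c} \<subseteq> {t. n$1*t + n$2*t^2 + n$3*t^3 = c}"
    by blast
  ultimately show ?thesis
    unfolding card_Gamma_inter_plane unfolding Gamma_inter_plane
    by (meson card_mono finite_imageI finite_subset order_trans)
qed

lemma Gamma_inter_plane_card_3_alternating:
  assumes "0 < M" "n \<noteq> 0" "card (Gamma M \<inter> plane n c) = 3"
  shows "alternating n"
proof -
  let ?R = "{t. M \<le> t \<and> n$1*t + n$2*t^2 + n$3*t^3 = c}"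
  obtain r1 r2 r3 where R: "?R = {r1, r2, r3}" and distinct: "r1 \<noteq> r2" "r2 \<noteq> r3" "r1 \<noteq> r3"
    using assms(3) unfolding card_Gamma_inter_plane by (auto simp: card_3_iff)
  then have roots: "r1 \<in> ?R" "r2 \<in> ?R" "r3 \<in> ?R" by auto
  then have pos: "r1 > 0" "r2 > 0" "r3 > 0" using assms(1) by auto
  have a2: "n$2 = -n$3*(r1+r2+r3)" and a1: "n$1 = n$3*(r1*r2+r1*r3+r2*r3)"
    using cubic_vieta[of r1 r2 r3 "n$1" "n$2" "n$3" c] roots distinct by auto
  have "n$3 \<noteq> 0"
    using a1 a2 nonzero_vec3_component[OF assms(2)] by auto
  then have "0 < n$3 * n$3" by (simp add: not_square_less_zero less_le)
  moreover have "0 < r1+r2+r3" "0 < r1*r2+r1*r3+r2*r3" using pos by (simp_all add: add_pos_pos)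
  ultimately have "0 < n$3 * n$1" "n$3 * n$2 < 0" "0 < n$3 * n$3"
    unfolding a1 a2 by (simp_all add: mult.assoc[symmetric] mult_pos_pos)
  then show ?thesis unfolding alternating_def by blast
qed

theorem mainTheorem5:
  fixes M3 :: real
  assumes hM: "\<And>n1 n2 n3 :: real^3. \<And>c1 c2 c3 :: real.
                 mutually_orthogonal_normals n1 n2 n3 \<Longrightarrow>
                 (\<exists>H\<in>{plane n1 c1, plane n2 c2, plane n3 c3}.
                    finite (Gamma M3 \<inter> H) \<and> card (Gamma M3 \<inter> H) \<le> 1)"
    and hpos: "M3 > 0"
    and orth: "mutually_orthogonal_normals n1 n2 n3"
  shows "finite (Gamma M3 \<inter> (plane n1 c1 \<union> plane n2 c2 \<union> plane n3 c3)) \<and>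
         card (Gamma M3 \<inter> (plane n1 c1 \<union> plane n2 c2 \<union> plane n3 c3)) \<le> 6"
proof -
  let ?A = "Gamma M3 \<inter> plane n1 c1" and ?B = "Gamma M3 \<inter> plane n2 c2"
    and ?C = "Gamma M3 \<inter> plane n3 c3"
  have n: "n1 \<noteq> 0" "n2 \<noteq> 0" "n3 \<noteq> 0" "n1 \<bullet> n2 = 0" "n1 \<bullet> n3 = 0" "n2 \<bullet> n3 = 0"
    using orth by (auto simp: mutually_orthogonal_normals_def)
  have le3: "finite ?A" "card ?A \<le> 3" "finite ?B" "card ?B \<le> 3" "finite ?C" "card ?C \<le> 3"
    using Gamma_inter_plane_finite_card_le_3 n(1-3) by blast+
  have "card ?A \<le> 1 \<or> card ?B \<le> 1 \<or> card ?C \<le> 1"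
    using hM[OF orth, of c1 c2 c3] by auto
  moreover have "\<not> (card ?A = 3 \<and> card ?B = 3)" "\<not> (card ?A = 3 \<and> card ?C = 3)"
    "\<not> (card ?B = 3 \<and> card ?C = 3)"
    using Gamma_inter_plane_card_3_alternating[OF hpos] inner_alternating_nonzero n by metis+
  ultimately have "card ?A + card ?B + card ?C \<le> 6" using le3 by linarith
  moreover have "card (?A \<union> ?B \<union> ?C) \<le> card ?A + card ?B + card ?C"
    by (meson add_right_mono card_Un_le order_trans)
  moreover have "Gamma M3 \<inter> (plane n1 c1 \<union> plane n2 c2 \<union> plane n3 c3) = ?A \<union> ?B \<union> ?C"
    by auto
  ultimately show ?thesis using le3 by simp
qed

end
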